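(* Let $\Theta=(\theta_1,\theta_2,\theta_3)\in\mathbb{R}^3$ be such that the numbers $1,\theta_1,\theta_2,\theta_3$ are linearly independent over $\mathbb{Z}$. Then $$ \beta(\Theta)\geqslant \alpha(\Theta)\, g_3(\alpha(\Theta)),\qquad\text{where}\qquad g_3(\alpha)=\frac{1}{2}\left(\frac{\alpha}{1-\alpha}+\sqrt{\left(\frac{\alpha}{1-\alpha}\right)^2+\frac{4\alpha}{1-\alpha}}\right). $$
   Context: For a real number $u$, $\|u\|$ denotes the distance from $u$ to the nearest integer. For $\Theta=(\theta_1,\theta_2,\theta_3)$ and real $t\geqslant 1$ put $\psi_\Theta(t)=\min_{x}\max_{1\leqslant i\leqslant 3}\|\theta_i x\|$, the minimum taken over positive integers $x\leqslant t$. The uniform Diophantine exponent is $\alpha(\Theta)=\sup\{\gamma>0:\ \limsup_{t\to+\infty} t^\gamma\psi_\Theta(t)<+\infty\}$, and the ordinary Diophantine exponent is $\beta(\Theta)=\sup\{\gamma>0:\ \liminf_{t\to+\infty} t^\gamma\psi_\Theta(t)<+\infty\}$. It is known that $\frac13\leqslant\alpha(\Theta)\leqslant 1$. *)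

theory Defs
  imports "HOL-Analysis.Analysis"
begin

definition dnint :: "real \<Rightarrow> real" where
  "dnint u = min (u - of_int \<lfloor>u\<rfloor>) (of_int \<lceil>u\<rceil> - u)"

definition psi :: "real \<Rightarrow> real \<Rightarrow> real \<Rightarrow> real \<Rightarrow> real" where
  "psi th1 th2 th3 t =
     Min ((\<lambda>x::nat. max (dnint (th1 * real x)) (max (dnint (th2 * real x)) (dnint (th3 * real x))))
          ` {x. 1 \<le> x \<and> real x \<le> t})"

definition unif_exp :: "real \<Rightarrow> real \<Rightarrow> real \<Rightarrow> ereal" where
  "unif_exp th1 th2 th3 =
     Sup (ereal ` {\<gamma>::real. \<gamma> > 0 \<and>
        Limsup at_top (\<lambda>t. ereal (t powr \<gamma> * psi th1 th2 th3 t)) < \<infinity>})"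

definition ord_exp :: "real \<Rightarrow> real \<Rightarrow> real \<Rightarrow> ereal" where
  "ord_exp th1 th2 th3 =
     Sup (ereal ` {\<gamma>::real. \<gamma> > 0 \<and>
        Liminf at_top (\<lambda>t. ereal (t powr \<gamma> * psi th1 th2 th3 t)) < \<infinity>})"

definition g3 :: "real \<Rightarrow> real" where
  "g3 a = (1/2) * (a / (1 - a) + sqrt ((a / (1 - a))^2 + 4 * a / (1 - a)))"

end

theory Submission
  imports Defs
begin

text \<open>
  Let \<open>q\<^sub>n\<close> be the best simultaneous approximations of \<open>\<Theta>\<close>, \<open>\<zeta>\<^sub>n = \<parallel>q\<^sub>n\<Theta>\<parallel>\<close>, and let
  \<open>x\<^sub>n = (q\<^sub>n, a\<^sub>1, a\<^sub>2, a\<^sub>3) \<in> \<int>\<^sup>4\<close> be the corresponding integer points. Since \<open>1, \<theta>\<^sub>1, \<theta>\<^sub>2, \<theta>\<^sub>3\<close>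
  are linearly independent over \<open>\<int>\<close>, the \<open>x\<^sub>n\<close> do not eventually stay in one hyperplane.
  Following the planes spanned by consecutive points then yields infinitely many \<open>P < B\<close> such that
  \<open>x\<^sub>P\<^sub>+\<^sub>1, x\<^sub>P\<^sub>+\<^sub>2, x\<^sub>B\<close> are coplanar while \<open>x\<^sub>P, x\<^sub>P\<^sub>+\<^sub>1, x\<^sub>P\<^sub>+\<^sub>2, x\<^sub>B\<^sub>+\<^sub>1\<close> are linearly independent.
  Their determinant is a nonzero integer, while column operations bound it by
  \<open>48 q\<^sub>P\<^sub>+\<^sub>2 \<zeta>\<^sub>P\<^sub>+\<^sub>1 \<zeta>\<^sub>P q\<^sub>B\<^sub>+\<^sub>1 \<zeta>\<^sub>B / q\<^sub>B\<close>.

  For \<open>\<gamma>\<close> below the uniform exponent we have \<open>\<zeta>\<^sub>n \<ll> q\<^sub>n\<^sub>+\<^sub>1\<^sup>-\<^sup>\<gamma>\<close>. If moreover \<open>q\<^sub>n\<^sub>+\<^sub>1 < q\<^sub>n\<^sup>G\<close> for all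
  large \<open>n\<close>, the logarithm of the determinant bound forces \<open>ln q\<^sub>P\<^sub>+\<^sub>1\<close> to stay bounded, as soon as
  \<open>G\<^sup>2 < a G + a\<close> with \<open>a = \<gamma>/(1-\<gamma>)\<close>, i.e. \<open>G < g\<^sub>3(\<gamma>)\<close>. Hence \<open>q\<^sub>n\<^sub>+\<^sub>1 \<ge> q\<^sub>n\<^sup>G\<close> infinitely often,
  and for those \<open>n\<close> we get \<open>\<zeta>\<^sub>n \<ll> q\<^sub>n\<^sup>-\<^sup>\<gamma>\<^sup>G\<close>, so the ordinary exponent is at least \<open>\<gamma>G\<close>.
\<close>

section \<open>Distance to the nearest integer\<close>

lemma dnint_eq_round: "dnint u = \<bar>u - of_int (round u)\<bar>"
proof (cases "u = of_int \<lfloor>u\<rfloor>")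
  case True
  then show ?thesis unfolding dnint_def by (metis ceiling_of_int round_of_int diff_self abs_zero min.idem)
next
  case False
  then have "\<lceil>u\<rceil> = \<lfloor>u\<rfloor> + 1" by (metis ceiling_altdef)
  moreover have "round u = \<lfloor>u\<rfloor> \<or> round u = \<lfloor>u\<rfloor> + 1" "round u = \<lfloor>u\<rfloor> \<longleftrightarrow> u - of_int \<lfloor>u\<rfloor> < 1/2"
    unfolding round_def by linarith+
  ultimately show ?thesis unfolding dnint_def by auto
qed

lemma dnint_le_half: "dnint u \<le> 1/2"
  unfolding dnint_eq_round using of_int_round_ge[of u] of_int_round_le[of u] by linarith

lemma dnint_diff_lt_if_same_cell:
  assumes "0 < N" and "\<lfloor>N * frac r\<rfloor> = \<lfloor>N * frac s\<rfloor>"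
  shows "dnint (r - s) < 1 / N"
proof -
  have "\<bar>N * frac r - N * frac s\<bar> < 1"
    using assms(2) floor_correct[of "N * frac r"] floor_correct[of "N * frac s"] by linarith
  then have "N * \<bar>frac r - frac s\<bar> < 1"
    using assms(1) by (simp add: abs_mult flip: right_diff_distrib)
  then have "\<bar>frac r - frac s\<bar> < 1 / N"
    using assms(1) by (simp add: mult.commute pos_less_divide_eq)
  moreover have "frac r - frac s = (r - s) - of_int (\<lfloor>r\<rfloor> - \<lfloor>s\<rfloor>)" by (simp add: frac_def)
  ultimately show ?thesis
    unfolding dnint_eq_round using round_diff_minimal[of "r - s" "\<lfloor>r\<rfloor> - \<lfloor>s\<rfloor>"] by linarith
qed

section \<open>Determinants of four vectors\<close>

text \<open>Vectors of \<open>\<real>\<^sup>4\<close> are functions on \<open>nat\<close> of which only the coordinates \<open>0..3\<close>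
  matter; \<open>det3\<close> is the minor on the coordinates \<open>1..3\<close>.\<close>

definition det4 :: "(nat \<Rightarrow> 'a::comm_ring_1) \<Rightarrow> (nat \<Rightarrow> 'a) \<Rightarrow> (nat \<Rightarrow> 'a) \<Rightarrow> (nat \<Rightarrow> 'a) \<Rightarrow> 'a" where
  "det4 u v w z =
      u 0 * v 1 * w 2 * z 3 - u 0 * v 1 * w 3 * z 2 - u 0 * v 2 * w 1 * z 3
    + u 0 * v 2 * w 3 * z 1 + u 0 * v 3 * w 1 * z 2 - u 0 * v 3 * w 2 * z 1
    - u 1 * v 0 * w 2 * z 3 + u 1 * v 0 * w 3 * z 2 + u 1 * v 2 * w 0 * z 3
    - u 1 * v 2 * w 3 * z 0 - u 1 * v 3 * w 0 * z 2 + u 1 * v 3 * w 2 * z 0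
    + u 2 * v 0 * w 1 * z 3 - u 2 * v 0 * w 3 * z 1 - u 2 * v 1 * w 0 * z 3
    + u 2 * v 1 * w 3 * z 0 + u 2 * v 3 * w 0 * z 1 - u 2 * v 3 * w 1 * z 0
    - u 3 * v 0 * w 1 * z 2 + u 3 * v 0 * w 2 * z 1 + u 3 * v 1 * w 0 * z 2
    - u 3 * v 1 * w 2 * z 0 - u 3 * v 2 * w 0 * z 1 + u 3 * v 2 * w 1 * z 0"


definition det3 :: "(nat \<Rightarrow> 'a::comm_ring_1) \<Rightarrow> (nat \<Rightarrow> 'a) \<Rightarrow> (nat \<Rightarrow> 'a) \<Rightarrow> 'a" where
  "det3 a b c =
      a 1 * b 2 * c 3 - a 1 * b 3 * c 2 - a 2 * b 1 * c 3
    + a 2 * b 3 * c 1 + a 3 * b 1 * c 2 - a 3 * b 2 * c 1"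

definition unit4 :: "nat \<Rightarrow> nat \<Rightarrow> 'a::zero_neq_one" where
  "unit4 l = (\<lambda>k. if k = l then 1 else 0)"

definition of_int_vec :: "(nat \<Rightarrow> int) \<Rightarrow> nat \<Rightarrow> 'a::ring_1" where
  "of_int_vec u = (\<lambda>k. of_int (u k))"

lemma det4_of_int:
  "det4 (of_int_vec u) (of_int_vec v) (of_int_vec w) (of_int_vec z) = (of_int (det4 u v w z) :: 'a::comm_ring_1)"
  unfolding det4_def of_int_vec_def by simp

lemma of_int_vec_unit4 [simp]: "of_int_vec (unit4 l) = unit4 l"
  unfolding unit4_def of_int_vec_def by auto

lemma det4_cong:
  assumes "\<And>k. k < 4 \<Longrightarrow> z k = z' k"
  shows "det4 u v w z = det4 u v w z'"
  using assms[of 0] assms[of 1] assms[of 2] assms[of 3] unfolding det4_def by simp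

lemma det4_linear:
  "det4 u v w (\<lambda>k. a * p k + b * r k) = a * det4 u v w p + b * det4 u v w r"
  unfolding det4_def by (simp add: algebra_simps)

lemma det4_expand_last:
  "det4 u v w z = det4 u v w (unit4 0) * z 0 + det4 u v w (unit4 1) * z 1 +
     det4 u v w (unit4 2) * z 2 + det4 u v w (unit4 3) * z 3"
  unfolding det4_def unit4_def by (simp add: algebra_simps)

lemma det4_swap_last: "det4 u v z w = - det4 u v w z"
  unfolding det4_def by (simp add: algebra_simps)

lemma det4_repeated:
  "det4 u v w u = 0" "det4 u v w v = 0" "det4 u v w w = 0"
  unfolding det4_def by (simp_all add: algebra_simps)

lemma det4_flip_coords:
  "det4 (\<lambda>k. if k = 0 then a 0 else f k * a 0 - a k) (\<lambda>k. if k = 0 then b 0 else f k * b 0 - b k)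
        (\<lambda>k. if k = 0 then c 0 else f k * c 0 - c k) (\<lambda>k. if k = 0 then d 0 else f k * d 0 - d k)
   = - det4 a b c d"
  unfolding det4_def by (simp add: algebra_simps)

lemma det4_column_ops:
  "det4 (\<lambda>k. u k - c * p k) p r (\<lambda>k. v k - d * p k - e * r k) = det4 u p r v"
  unfolding det4_def by (simp add: algebra_simps)

lemma det4_first_row_zero:
  assumes "u 0 = 0" "v 0 = 0"
  shows "det4 u p r v = r 0 * det3 u p v - p 0 * det3 u r v"
  using assms unfolding det4_def det3_def by (simp add: algebra_simps)

lemma cramer4:
  assumes "k < 4"
  shows "det4 u v w y * x k = det4 x v w y * u k + det4 u x w y * v k + det4 u v x y * w k + det4 u v w x * y k"
proof -
  have "k = 0 \<or> k = 1 \<or> k = 2 \<or> k = 3" using assms by auto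
  then show ?thesis unfolding det4_def by (elim disjE; simp add: algebra_simps)
qed

lemma det3_abs_le:
  fixes a b c :: "nat \<Rightarrow> real"
  assumes "\<And>i. i \<in> {1,2,3} \<Longrightarrow> \<bar>a i\<bar> \<le> Ma"
    and "\<And>i. i \<in> {1,2,3} \<Longrightarrow> \<bar>b i\<bar> \<le> Mb"
    and "\<And>i. i \<in> {1,2,3} \<Longrightarrow> \<bar>c i\<bar> \<le> Mc"
  shows "\<bar>det3 a b c\<bar> \<le> 6 * (Ma * Mb * Mc)"
proof -
  have term_le: "\<bar>a i * b j * c k\<bar> \<le> Ma * Mb * Mc" if "i \<in> {1,2,3}" "j \<in> {1,2,3}" "k \<in> {1,2,3}" for i j k
  proof -
    have "\<bar>a i\<bar> \<le> Ma" "\<bar>b j\<bar> \<le> Mb" "\<bar>c k\<bar> \<le> Mc" using assms that by auto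
    then show ?thesis unfolding abs_mult by (intro mult_mono) (auto intro: order_trans[OF abs_ge_zero])
  qed
  show ?thesis
    unfolding det3_def using term_le[of 1 2 3] term_le[of 1 3 2] term_le[of 2 1 3] term_le[of 2 3 1]
      term_le[of 3 1 2] term_le[of 3 2 1] by (simp add: abs_le_iff)
qed

lemma det4_first_row_zero_abs_le:
  fixes u p r v :: "nat \<Rightarrow> real"
  assumes "u 0 = 0" "v 0 = 0" "0 \<le> p 0" "p 0 \<le> r 0"
    and "\<And>i. i \<in> {1,2,3} \<Longrightarrow> \<bar>u i\<bar> \<le> U"
    and "\<And>i. i \<in> {1,2,3} \<Longrightarrow> \<bar>p i\<bar> \<le> R" "\<And>i. i \<in> {1,2,3} \<Longrightarrow> \<bar>r i\<bar> \<le> R"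
    and "\<And>i. i \<in> {1,2,3} \<Longrightarrow> \<bar>v i\<bar> \<le> V"
  shows "\<bar>det4 u p r v\<bar> \<le> 12 * r 0 * U * R * V"
proof -
  define K where "K = 6 * (U * R * V)"
  have K: "\<bar>det3 u p v\<bar> \<le> K" "\<bar>det3 u r v\<bar> \<le> K"
    unfolding K_def using assms by (auto intro!: det3_abs_le)
  have "\<bar>det4 u p r v\<bar> \<le> r 0 * \<bar>det3 u p v\<bar> + p 0 * \<bar>det3 u r v\<bar>"
    unfolding det4_first_row_zero[of u v p r, OF assms(1,2)]
    using assms(3,4) abs_triangle_ineq4[of "r 0 * det3 u p v" "p 0 * det3 u r v"]
    by (simp add: abs_mult)
  also have "\<dots> \<le> r 0 * K + r 0 * K"
    using K assms(3,4) by (intro add_mono mult_mono) auto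
  finally show ?thesis unfolding K_def by (simp add: mult_ac)
qed

definition in_span2 :: "(nat \<Rightarrow> real) \<Rightarrow> (nat \<Rightarrow> real) \<Rightarrow> (nat \<Rightarrow> real) \<Rightarrow> bool" where
  "in_span2 u v w \<longleftrightarrow> (\<exists>a b. \<forall>k<4. w k = a * u k + b * v k)"

lemma in_span2_left: "in_span2 u v u"
  unfolding in_span2_def by (rule exI[of _ 1], rule exI[of _ 0]) simp

lemma in_span2_right: "in_span2 u v v"
  unfolding in_span2_def by (rule exI[of _ 0], rule exI[of _ 1]) simp

lemma in_span2_trans:
  assumes "in_span2 u v p" "in_span2 u v r" "in_span2 p r z"
  shows "in_span2 u v z"
proof -
  obtain a b c d e f where
    "\<forall>k<4. p k = a * u k + b * v k" "\<forall>k<4. r k = c * u k + d * v k" "\<forall>k<4. z k = e * p k + f * r k"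
    using assms unfolding in_span2_def by meson
  then have "\<forall>k<4. z k = (e * a + f * c) * u k + (e * b + f * d) * v k"
    by (simp add: algebra_simps)
  then show ?thesis unfolding in_span2_def by blast
qed

lemma det4_zero_on_span2:
  assumes "in_span2 p r z" "det4 u v w p = 0" "det4 u v w r = 0"
  shows "det4 u v w z = 0"
proof -
  obtain a b where "\<forall>k<4. z k = a * p k + b * r k" using assms(1) unfolding in_span2_def by blast
  then have "det4 u v w z = det4 u v w (\<lambda>k. a * p k + b * r k)" by (intro det4_cong) simp
  then show ?thesis using assms(2,3) by (simp add: det4_linear)
qed

lemma det4_zero_on_dependent:
  fixes u v w x y :: "nat \<Rightarrow> real"
  assumes "det4 u v w y \<noteq> 0" "det4 u v w x = 0"
    and "det4 U V W u = 0" "det4 U V W v = 0" "det4 U V W w = 0"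
  shows "det4 U V W x = 0"
proof -
  define D where "D = det4 u v w y"
  define c1 c2 c3 where "c1 = det4 x v w y / D" "c2 = det4 u x w y / D" "c3 = det4 u v x y / D"
  have "x k = c1 * u k + 1 * (c2 * v k + c3 * w k)" if "k < 4" for k
    using cramer4[OF that, of u v w y x] assms(1,2) unfolding c1_c2_c3_def D_def
    by (simp add: field_simps)
  then have "det4 U V W x = det4 U V W (\<lambda>k. c1 * u k + 1 * (c2 * v k + c3 * w k))"
    by (intro det4_cong) simp
  also have "\<dots> = c1 * det4 U V W u + 1 * (c2 * det4 U V W v + c3 * det4 U V W w)"
    unfolding det4_linear ..
  finally show ?thesis using assms(3-5) by simp
qed

definition minor2 :: "(nat \<Rightarrow> real) \<Rightarrow> (nat \<Rightarrow> real) \<Rightarrow> nat \<Rightarrow> real" where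
  "minor2 u v j = u 0 * v j - u j * v 0"

lemma det4_units_nonzero_if_minor2:
  assumes "minor2 u v j \<noteq> 0" "j \<in> {1,2,3}"
  shows "\<exists>l l'. det4 u v (unit4 l) (unit4 l') \<noteq> 0"
proof -
  have "det4 u v (unit4 2) (unit4 3) = minor2 u v 1" "det4 u v (unit4 1) (unit4 3) = - minor2 u v 2"
    "det4 u v (unit4 1) (unit4 2) = minor2 u v 3"
    unfolding det4_def unit4_def minor2_def by simp_all
  then show ?thesis using assms by (metis empty_iff insertE neg_equal_0_iff_equal)
qed

lemma det4_units_nonzero_if_not_in_span2:
  assumes "minor2 u v j \<noteq> 0" "j \<in> {1,2,3}" "\<not> in_span2 u v w"
  shows "\<exists>l. det4 u v w (unit4 l) \<noteq> 0"
proof (rule ccontr)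
  assume "\<not> ?thesis"
  then have zero: "det4 u v w (unit4 l) = 0" for l by blast
  obtain l l' where D: "det4 u v (unit4 l) (unit4 l') \<noteq> 0"
    using det4_units_nonzero_if_minor2[OF assms(1,2)] by blast
  define D' where "D' = det4 u v (unit4 l) (unit4 l')"
  have "\<forall>k<4. w k = (det4 w v (unit4 l) (unit4 l') / D') * u k + (det4 u w (unit4 l) (unit4 l') / D') * v k"
  proof (intro allI impI)
    fix k :: nat assume "k < 4"
    from cramer4[OF this, of u v "unit4 l" "unit4 l'" w]
    have "D' * w k = det4 w v (unit4 l) (unit4 l') * u k + det4 u w (unit4 l) (unit4 l') * v k"
      unfolding D'_def det4_swap_last[of u v "unit4 l" w] zero by simp
    then show "w k = (det4 w v (unit4 l) (unit4 l') / D') * u k + (det4 u w (unit4 l) (unit4 l') / D') * v k"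
      using D unfolding D'_def by (simp add: field_simps)
  qed
  then show False using assms(3) unfolding in_span2_def by blast
qed

section \<open>Two real inequalities\<close>

text \<open>In the application \<open>x, y, u, v\<close> are \<open>ln q\<^sub>P\<^sub>+\<^sub>1, ln q\<^sub>P\<^sub>+\<^sub>2, ln q\<^sub>B, ln q\<^sub>B\<^sub>+\<^sub>1\<close>:
  \<open>det\<close> is the logarithmic determinant estimate and \<open>slow\<close> the hypothesis \<open>q\<^sub>n\<^sub>+\<^sub>1 < q\<^sub>n\<^sup>G\<close>.\<close>

lemma slow_growth_ineq:
  fixes a G k x y u v :: real
  assumes a: "0 < a" and G: "0 < G" "G^2 < a * G + a"
    and det: "(1 + a) * u \<le> k + y - a * x + v"
    and slow: "v \<le> G * u" and "y \<le> u"
  shows "a * x + (a - G) * y \<le> k"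
proof -
  have "G < 1 + a"
  proof (rule ccontr)
    assume "\<not> G < 1 + a"
    then have "(1 + a) * G \<le> G * G" using G by (intro mult_right_mono) auto
    then show False using G(2) \<open>\<not> G < 1 + a\<close> unfolding power2_eq_square by (simp add: algebra_simps)
  qed
  have "(1 + a) * y \<le> (1 + a) * u" using \<open>y \<le> u\<close> a by (intro mult_left_mono) auto
  then have "(1 + a - G) * (a * x + a * y - k) \<le> (1 + a - G) * v"
    using \<open>G < 1 + a\<close> det by (intro mult_left_mono) (auto simp: algebra_simps)
  moreover have "G * ((1 + a) * u) \<le> G * (k + y - a * x + v)" using det G by (intro mult_left_mono) auto
  moreover have "(1 + a) * v \<le> (1 + a) * (G * u)" using slow a by (intro mult_left_mono) auto
  ultimately have "(1 + a) * (a * x + (a - G) * y) \<le> (1 + a) * k"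
    by (simp add: algebra_simps)
  then show ?thesis using a by simp
qed

lemma slow_growth_bounded:
  fixes a G k x y u v :: real
  assumes a: "0 < a" and G: "0 < G" "G^2 < a * G + a"
    and det: "(1 + a) * u \<le> k + y - a * x + v"
    and slow: "v \<le> G * u" "y \<le> G * x" and "y \<le> u" "x \<le> y" "0 \<le> x"
  shows "x \<le> \<bar>k\<bar> * (1 / a + 1 / (a + a * G - G^2))"
proof -
  have ineq: "a * x + (a - G) * y \<le> k" using slow_growth_ineq[OF a G det slow(1)] assms by blast
  define \<delta> where "\<delta> = a + a * G - G^2"
  have pos: "0 < \<delta>" "0 \<le> \<bar>k\<bar> * (1 / a)" "0 \<le> \<bar>k\<bar> * (1 / \<delta>)"
    using a G unfolding \<delta>_def by auto
  show ?thesis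
  proof (cases "G \<le> a")
    case True
    then have "a * x \<le> \<bar>k\<bar>" using ineq \<open>x \<le> y\<close> \<open>0 \<le> x\<close> by (smt (verit) mult_nonneg_nonneg)
    then have "x \<le> \<bar>k\<bar> * (1 / a)" using a by (simp add: field_simps)
    moreover have "0 \<le> \<bar>k\<bar> * (1 / \<delta>)" using pos(1) by simp
    ultimately show ?thesis unfolding \<delta>_def[symmetric] by (simp add: distrib_left)
  next
    case False
    then have "(a - G) * (G * x) \<le> (a - G) * y" using slow(2) by (intro mult_left_mono_neg) auto
    then have "\<delta> * x \<le> \<bar>k\<bar>" using ineq unfolding \<delta>_def by (simp add: algebra_simps power2_eq_square)
    then have "x \<le> \<bar>k\<bar> * (1 / \<delta>)" using pos by (simp add: field_simps)
    then show ?thesis using pos unfolding \<delta>_def[symmetric] by (simp add: distrib_left)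
  qed
qed

lemma sq_lt_if_lt_quadratic_root:
  fixes A G :: real
  assumes "0 < A" "0 < G" "G < (1/2) * (A + sqrt (A^2 + 4 * A))"
  shows "G^2 < A * G + A"
proof (cases "2 * G < A")
  case True
  then have "G * G < G * A" using assms(2) by (intro mult_strict_left_mono) auto
  then show ?thesis using assms(1) by (simp add: power2_eq_square mult.commute)
next
  case False
  have "(2 * G - A)^2 < (sqrt (A^2 + 4 * A))^2"
    using False assms(3) by (intro power_strict_mono) auto
  then show ?thesis using assms(1) by (simp add: power2_eq_square algebra_simps)
qed

lemma g3_eq: "g3 x = (1/2) * (x / (1 - x) + sqrt ((x / (1 - x))^2 + 4 * (x / (1 - x))))"
  unfolding g3_def by simp

lemma ratio_le_g3:
  assumes "0 < x" "x < 1"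
  shows "x / (1 - x) \<le> g3 x"
proof -
  define A where "A = x / (1 - x)"
  have "A \<le> sqrt (A^2 + 4 * A)" unfolding A_def using assms by (intro real_le_rsqrt) simp
  then show ?thesis unfolding g3_eq A_def[symmetric] by simp
qed

section \<open>Best approximations\<close>

lemma unbounded_if_always_later:
  fixes Q :: "nat \<Rightarrow> bool"
  assumes "Q n" and "\<And>n. Q n \<Longrightarrow> \<exists>m>n. Q m"
  shows "\<exists>m\<ge>k. Q m"
proof (induction k)
  case 0
  then show ?case using assms(1) by blast
next
  case (Suc k)
  then show ?case using assms(2) by (meson Suc_leI le_less_trans)
qed

lemma finite_psi_domain: "finite {x::nat. 1 \<le> x \<and> real x \<le> t}"
  by (rule finite_subset[of _ "{..nat \<lceil>t\<rceil>}"]) (auto simp: le_nat_iff ceiling_le_iff le_ceiling_iff)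

locale Z_independent =
  fixes th1 th2 th3 :: real
  assumes indep: "\<And>a0 a1 a2 a3 :: int.
      of_int a0 + of_int a1 * th1 + of_int a2 * th2 + of_int a3 * th3 = 0 \<Longrightarrow>
      a0 = 0 \<and> a1 = 0 \<and> a2 = 0 \<and> a3 = 0"
begin

definition theta :: "nat \<Rightarrow> real" where
  "theta i = (if i = 1 then th1 else if i = 2 then th2 else th3)"

definition sdist :: "nat \<Rightarrow> real" where
  "sdist x = max (dnint (th1 * real x)) (max (dnint (th2 * real x)) (dnint (th3 * real x)))"

lemma psi_eq_Min_sdist: "psi th1 th2 th3 t = Min (sdist ` {x. 1 \<le> x \<and> real x \<le> t})"
  unfolding psi_def sdist_def ..

lemma psi_le_sdist:
  assumes "1 \<le> x" "real x \<le> t"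
  shows "psi th1 th2 th3 t \<le> sdist x"
  unfolding psi_eq_Min_sdist using assms finite_psi_domain by (intro Min_le) auto

lemma psi_nonneg:
  assumes "1 \<le> t"
  shows "0 \<le> psi th1 th2 th3 t"
proof -
  have "1 \<in> {x::nat. 1 \<le> x \<and> real x \<le> t}" using assms by simp
  then show ?thesis
    unfolding psi_eq_Min_sdist sdist_def dnint_eq_round using finite_psi_domain
    by (subst Min_ge_iff) auto
qed

lemma sdist_pos:
  assumes "1 \<le> x"
  shows "0 < sdist x"
proof (rule ccontr)
  assume "\<not> 0 < sdist x"
  then have "th1 * real x = of_int (round (th1 * real x))"
    unfolding sdist_def dnint_eq_round by linarith
  then have "of_int (- round (th1 * real x)) + of_int (int x) * th1 + of_int 0 * th2 + of_int 0 * th3 = 0"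
    by (simp add: mult.commute)
  then show False using indep assms by fastforce
qed

lemma dirichlet:
  assumes "1 \<le> N"
  shows "\<exists>x. 1 \<le> x \<and> x \<le> N^3 \<and> sdist x < 1 / real N"
proof -
  define cell where "cell r = \<lfloor>real N * frac r\<rfloor>" for r
  define f where "f x = (cell (th1 * real x), cell (th2 * real x), cell (th3 * real x))" for x :: nat
  have cell_range: "cell r \<in> {0..<int N}" for r
    using frac_lt_1[of r] frac_ge_0[of r] assms unfolding cell_def by (simp add: floor_less_iff)
  have "card (f ` {0..N^3}) \<le> card ({0..<int N} \<times> {0..<int N} \<times> {0..<int N})"
    using cell_range unfolding f_def by (intro card_mono) auto
  also have "\<dots> < card {0..N^3}" by (simp add: card_cartesian_product power3_eq_cube)
  finally obtain x y where xy: "x < y" "y \<le> N^3" "f x = f y"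
    using pigeonhole[of f "{0..N^3}"] unfolding inj_on_def by (metis atLeastAtMost_iff linorder_neqE_nat)
  have "dnint (t * real (y - x)) < 1 / real N" if "cell (t * real y) = cell (t * real x)" for t
    using dnint_diff_lt_if_same_cell[of "real N" "t * real y" "t * real x"] that assms xy(1)
    unfolding cell_def by (simp add: of_nat_diff right_diff_distrib)
  then have "sdist (y - x) < 1 / real N"
    using xy(3) unfolding sdist_def f_def by simp
  then show ?thesis using xy(1,2) by (intro exI[of _ "y - x"]) auto
qed

lemma exists_smaller_sdist:
  assumes "1 \<le> q"
  shows "\<exists>x. 1 \<le> x \<and> sdist x < sdist q"
proof -
  obtain N :: nat where N: "1 / sdist q < real N" using reals_Archimedean2 by blast
  have "0 < sdist q" using sdist_pos[OF assms] .
  then have "1 < real N * sdist q" using N by (simp add: field_simps)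
  then have "0 < N" by (metis gr0I mult_eq_0_iff not_one_less_zero of_nat_0)
  then have "1 \<le> N" "1 / real N < sdist q"
    using \<open>1 < real N * sdist q\<close> by (auto simp: field_simps)
  then show ?thesis using dirichlet by (meson less_trans)
qed

definition is_best :: "nat \<Rightarrow> bool" where
  "is_best q \<longleftrightarrow> 1 \<le> q \<and> (\<forall>y. 1 \<le> y \<and> y \<le> q \<longrightarrow> sdist q \<le> sdist y)"

lemma next_best:
  assumes "is_best q"
  defines "q' \<equiv> LEAST x. q < x \<and> sdist x < sdist q"
  shows "q < q'" "sdist q' < sdist q" "\<And>y. q < y \<Longrightarrow> y < q' \<Longrightarrow> sdist q \<le> sdist y" "is_best q'"
proof -
  obtain x where x: "1 \<le> x" "sdist x < sdist q"
    using exists_smaller_sdist assms unfolding is_best_def by blast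
  then have "q < x" using assms unfolding is_best_def by (meson not_le not_less)
  then show q': "q < q'" "sdist q' < sdist q"
    using LeastI[of "\<lambda>x. q < x \<and> sdist x < sdist q" x] x unfolding q'_def by auto
  show gap: "sdist q \<le> sdist y" if "q < y" "y < q'" for y
    using not_less_Least[of y "\<lambda>x. q < x \<and> sdist x < sdist q"] that unfolding q'_def by auto
  have "sdist q' \<le> sdist y" if "1 \<le> y" "y \<le> q'" for y
  proof (cases "y \<le> q")
    case True
    then show ?thesis using assms that q' unfolding is_best_def by force
  next
    case False
    then show ?thesis using gap[of y] q' that by (cases "y = q'") auto
  qed
  then show "is_best q'" using q' assms unfolding is_best_def by auto
qed

text \<open>The \<open>LEAST\<close> below ranges over a nonempty set (lemma \<open>next_best\<close>).\<close>

primrec bestq :: "nat \<Rightarrow> nat" where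
  "bestq 0 = 1"
| "bestq (Suc n) = (LEAST x. bestq n < x \<and> sdist x < sdist (bestq n))"

lemma is_best_bestq: "is_best (bestq n)"
proof (induction n)
  case 0
  then show ?case unfolding is_best_def by auto
next
  case (Suc n)
  then show ?case using next_best(4) by simp
qed

declare bestq.simps(2) [simp del]

definition zeta :: "nat \<Rightarrow> real" where "zeta n = sdist (bestq n)"

lemma bestq_less_Suc: "bestq n < bestq (Suc n)"
  using next_best(1)[OF is_best_bestq] unfolding bestq.simps(2) .

lemma zeta_Suc_less: "zeta (Suc n) < zeta n"
  using next_best(2)[OF is_best_bestq] unfolding zeta_def bestq.simps(2) .

lemma bestq_ge_1: "1 \<le> bestq n"
  using is_best_bestq unfolding is_best_def by blast

lemma bestq_strict_mono: "strict_mono bestq"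
  unfolding strict_mono_Suc_iff using bestq_less_Suc by blast

lemma bestq_ge: "n + 1 \<le> bestq n"
proof (induction n)
  case (Suc n)
  then show ?case using bestq_less_Suc[of n] by linarith
qed simp

lemma zeta_le_sdist:
  assumes "1 \<le> y" "y < bestq (Suc n)"
  shows "zeta n \<le> sdist y"
proof (cases "y \<le> bestq n")
  case True
  then show ?thesis using is_best_bestq[of n] assms(1) unfolding zeta_def is_best_def by blast
next
  case False
  then show ?thesis
    using next_best(3)[OF is_best_bestq[of n], of y] assms(2) unfolding zeta_def bestq.simps(2) by simp
qed

lemma zeta_strict_antimono: "m < n \<Longrightarrow> zeta n < zeta m"
proof (induction n)
  case (Suc n)
  then show ?case using zeta_Suc_less[of n] by (cases "m = n") auto
qed simp

lemma zeta_antimono: "m \<le> n \<Longrightarrow> zeta n \<le> zeta m"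
  using zeta_strict_antimono by (cases "m = n") (auto intro: less_imp_le)

lemma zeta_pos: "0 < zeta n"
  unfolding zeta_def using sdist_pos bestq_ge_1 by blast

lemma zeta_le_half: "zeta n \<le> 1/2"
  unfolding zeta_def sdist_def by (intro max.boundedI dnint_le_half)

lemma psi_eq_zeta:
  assumes "real (bestq n) \<le> t" "t < real (bestq (Suc n))"
  shows "psi th1 th2 th3 t = zeta n"
  unfolding psi_eq_Min_sdist zeta_def
proof (rule Min_eqI)
  show "finite (sdist ` {x. 1 \<le> x \<and> real x \<le> t})" using finite_psi_domain by blast
  show "sdist (bestq n) \<in> sdist ` {x. 1 \<le> x \<and> real x \<le> t}" using assms bestq_ge_1[of n] by blast
  show "sdist (bestq n) \<le> z" if "z \<in> sdist ` {x. 1 \<le> x \<and> real x \<le> t}" for z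
    using that zeta_le_sdist assms(2) unfolding zeta_def by fastforce
qed

section \<open>The integer points of the best approximations\<close>

definition X :: "nat \<Rightarrow> nat \<Rightarrow> int" where
  "X n k = (if k = 0 then int (bestq n) else round (theta k * real (bestq n)))"

abbreviation Xr :: "nat \<Rightarrow> nat \<Rightarrow> real" where
  "Xr n \<equiv> of_int_vec (X n)"

definition Y :: "nat \<Rightarrow> nat \<Rightarrow> real" where
  "Y n k = (if k = 0 then real (bestq n) else theta k * real (bestq n) - Xr n k)"

lemma Y_0: "Y n 0 = real (bestq n)"
  unfolding Y_def by simp

lemma Y_eq_Xr: "Y n = (\<lambda>k. if k = 0 then Xr n 0 else theta k * Xr n 0 - Xr n k)"
  unfolding Y_def X_def of_int_vec_def by auto

lemma abs_Y_eq_dnint: "k \<in> {1,2,3} \<Longrightarrow> \<bar>Y n k\<bar> = dnint (theta k * real (bestq n))"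
  unfolding Y_def X_def of_int_vec_def dnint_eq_round by auto

lemma abs_Y_le_zeta: "k \<in> {1,2,3} \<Longrightarrow> \<bar>Y n k\<bar> \<le> zeta n"
  unfolding abs_Y_eq_dnint zeta_def sdist_def theta_def by auto

lemma zeta_attained: "\<exists>k\<in>{1,2,3}. \<bar>Y n k\<bar> = zeta n"
  unfolding zeta_def sdist_def using abs_Y_eq_dnint[of _ n]
  by (simp add: theta_def max_def split: if_splits)

lemma det4_Xr_eq_det4_Y: "det4 (Xr a) (Xr b) (Xr c) (Xr d) = - det4 (Y a) (Y b) (Y c) (Y d)"
  unfolding Y_eq_Xr det4_flip_coords by simp

lemma minor2_Xr_nonzero:
  assumes "m < n"
  shows "\<exists>j\<in>{1,2,3}. minor2 (Xr m) (Xr n) j \<noteq> 0"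
proof (rule ccontr)
  assume "\<not> ?thesis"
  obtain j where j: "j \<in> {1,2,3}" "\<bar>Y m j\<bar> = zeta m" using zeta_attained by blast
  with \<open>\<not> ?thesis\<close> have "real (bestq m) * Y n j = real (bestq n) * Y m j"
    unfolding minor2_def Y_eq_Xr by (auto simp: X_def of_int_vec_def algebra_simps)
  then have "real (bestq m) * \<bar>Y n j\<bar> = real (bestq n) * zeta m"
    using j(2) by (metis abs_mult abs_of_nat)
  moreover have "real (bestq m) * \<bar>Y n j\<bar> \<le> real (bestq m) * zeta m"
    using abs_Y_le_zeta[OF j(1), of n] zeta_antimono[of m n] assms by (intro mult_left_mono) auto
  moreover have "real (bestq m) * zeta m < real (bestq n) * zeta m"
    using bestq_strict_mono assms zeta_pos[of m] by (simp add: strict_mono_less)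
  ultimately show False by simp
qed

lemma int_form_not_eventually_zero:
  fixes c :: "nat \<Rightarrow> int"
  assumes nonzero: "c 0 \<noteq> 0 \<or> c 1 \<noteq> 0 \<or> c 2 \<noteq> 0 \<or> c 3 \<noteq> 0"
    and vanish: "\<And>n. N \<le> n \<Longrightarrow> c 0 * X n 0 + c 1 * X n 1 + c 2 * X n 2 + c 3 * X n 3 = 0"
  shows False
proof -
  define \<kappa> where "\<kappa> = of_int (c 0) + of_int (c 1) * th1 + of_int (c 2) * th2 + of_int (c 3) * th3"
  define S :: real where "S = \<bar>of_int (c 1)\<bar> + \<bar>of_int (c 2)\<bar> + \<bar>of_int (c 3)\<bar>"
  have bounded: "real (bestq n) * \<bar>\<kappa>\<bar> \<le> S" if "N \<le> n" for n
  proof -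
    have "real (bestq n) * \<kappa> = of_int (c 1) * Y n 1 + of_int (c 2) * Y n 2 + of_int (c 3) * Y n 3"
      using arg_cong[OF vanish[OF that], of real_of_int]
      unfolding \<kappa>_def Y_def X_def of_int_vec_def theta_def by (simp add: algebra_simps)
    moreover have "\<bar>of_int (c i) * Y n i\<bar> \<le> \<bar>of_int (c i)\<bar>" if "i \<in> {1,2,3}" for i
      using abs_Y_le_zeta[OF that, of n] zeta_le_half[of n]
      unfolding abs_mult by (intro mult_left_le) auto
    ultimately have "\<bar>real (bestq n) * \<kappa>\<bar> \<le> S"
      unfolding S_def by (smt (verit) insertCI)
    then show ?thesis by (simp add: abs_mult)
  qed
  have "\<kappa> = 0"
  proof (rule ccontr)
    assume "\<kappa> \<noteq> 0"
    obtain m :: nat where m: "S / \<bar>\<kappa>\<bar> < real m" using reals_Archimedean2 by blast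
    define n where "n = max N m"
    have "S / \<bar>\<kappa>\<bar> < real (bestq n)" using m bestq_ge[of n] unfolding n_def by linarith
    then have "S < real (bestq n) * \<bar>\<kappa>\<bar>" using \<open>\<kappa> \<noteq> 0\<close> by (simp add: pos_divide_less_eq)
    with bounded[of n] show False unfolding n_def by simp
  qed
  then show False using indep nonzero unfolding \<kappa>_def by blast
qed

lemma det4_form_not_eventually_zero:
  fixes U V W :: "nat \<Rightarrow> int"
  assumes nonzero: "det4 (of_int_vec U) (of_int_vec V) (of_int_vec W) (unit4 l) \<noteq> (0::real)"
    and vanish: "\<And>n. N \<le> n \<Longrightarrow> det4 (of_int_vec U) (of_int_vec V) (of_int_vec W) (Xr n) = 0"
  shows False
proof (rule int_form_not_eventually_zero)
  define c where "c i = det4 U V W (unit4 i)" for i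
  have c: "det4 (of_int_vec U) (of_int_vec V) (of_int_vec W) (unit4 i) = (of_int (c i) :: real)" for i
    using det4_of_int[of U V W "unit4 i"] unfolding c_def by simp
  have "l < 4" using nonzero by (rule contrapos_np) (simp add: det4_def unit4_def)
  then show "c 0 \<noteq> 0 \<or> c 1 \<noteq> 0 \<or> c 2 \<noteq> 0 \<or> c 3 \<noteq> 0"
    using nonzero unfolding c by (auto simp: less_Suc_eq numeral_eq_Suc)
  fix n assume "N \<le> n"
  then have "real_of_int (c 0 * X n 0 + c 1 * X n 1 + c 2 * X n 2 + c 3 * X n 3) = 0"
    using vanish[of n] unfolding det4_expand_last[where z = "Xr n"] c by (simp add: of_int_vec_def)
  then show "c 0 * X n 0 + c 1 * X n 1 + c 2 * X n 2 + c 3 * X n 3 = 0" by linarith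
qed

lemma not_eventually_in_span2: "\<not> (\<forall>n\<ge>N. in_span2 (Xr m) (Xr (Suc m)) (Xr n))"
proof
  assume in_plane: "\<forall>n\<ge>N. in_span2 (Xr m) (Xr (Suc m)) (Xr n)"
  obtain j where j: "j \<in> {1,2,3}" "minor2 (Xr m) (Xr (Suc m)) j \<noteq> 0"
    using minor2_Xr_nonzero[OF lessI] by blast
  obtain l l' where "det4 (Xr m) (Xr (Suc m)) (unit4 l) (unit4 l') \<noteq> 0"
    using det4_units_nonzero_if_minor2[OF j(2,1)] by blast
  then show False
  proof (rule det4_form_not_eventually_zero[of "X m" "X (Suc m)" "unit4 l" l' N, unfolded of_int_vec_unit4])
    fix n assume n: "N \<le> n"
    show "det4 (Xr m) (Xr (Suc m)) (unit4 l) (Xr n) = 0"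
      by (rule det4_zero_on_span2[OF in_plane[rule_format, OF n] det4_repeated(1,2)])
  qed
qed

definition indep3 :: "nat \<Rightarrow> bool" where
  "indep3 P \<longleftrightarrow> \<not> in_span2 (Xr P) (Xr (Suc P)) (Xr (Suc (Suc P)))"

lemma indep3_frequently: "\<exists>P\<ge>N. indep3 P"
proof (rule ccontr)
  assume "\<not> ?thesis"
  then have step: "in_span2 (Xr P) (Xr (Suc P)) (Xr (Suc (Suc P)))" if "N \<le> P" for P
    using that unfolding indep3_def by auto
  have plane: "in_span2 (Xr N) (Xr (Suc N)) (Xr (N + d)) \<and> in_span2 (Xr N) (Xr (Suc N)) (Xr (Suc (N + d)))"
    for d
  proof (induction d)
    case 0
    then show ?case by (simp add: in_span2_left in_span2_right)
  next
    case (Suc d)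
    have "in_span2 (Xr N) (Xr (Suc N)) (Xr (Suc (Suc (N + d))))"
      by (rule in_span2_trans[OF Suc.IH[THEN conjunct1] Suc.IH[THEN conjunct2] step]) simp
    then show ?case using Suc.IH by simp
  qed
  have "in_span2 (Xr N) (Xr (Suc N)) (Xr n)" if "N \<le> n" for n
    using plane[of "n - N", THEN conjunct1] that by simp
  then show False using not_eventually_in_span2 by blast
qed

lemma indep3_normal_nonzero:
  assumes "indep3 P"
  shows "\<exists>l. det4 (Xr P) (Xr (Suc P)) (Xr (Suc (Suc P))) (unit4 l) \<noteq> 0"
proof -
  obtain j where "j \<in> {1,2,3}" "minor2 (Xr P) (Xr (Suc P)) j \<noteq> 0"
    using minor2_Xr_nonzero[OF lessI] by blast
  then show ?thesis using det4_units_nonzero_if_not_in_span2 assms unfolding indep3_def by blast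
qed

lemma plane_exit:
  obtains B where "Suc A \<le> B" "\<And>n. A \<le> n \<Longrightarrow> n \<le> B \<Longrightarrow> in_span2 (Xr A) (Xr (Suc A)) (Xr n)"
    "\<not> in_span2 (Xr A) (Xr (Suc A)) (Xr (Suc B))"
proof -
  define Q where "Q n \<longleftrightarrow> A \<le> n \<and> \<not> in_span2 (Xr A) (Xr (Suc A)) (Xr n)" for n
  define E where "E = (LEAST n. Q n)"
  have "\<exists>n. Q n" using not_eventually_in_span2[of A A] unfolding Q_def by auto
  then have E: "Q E" "\<And>n. n < E \<Longrightarrow> \<not> Q n"
    unfolding E_def by (rule LeastI_ex) (rule not_less_Least)
  have "E \<noteq> A" "E \<noteq> Suc A" "A \<le> E"
    using E(1) in_span2_left in_span2_right unfolding Q_def by auto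
  then have "Suc (Suc A) \<le> E" by linarith
  moreover have "in_span2 (Xr A) (Xr (Suc A)) (Xr n)" if "A \<le> n" "n < E" for n
    using E(2)[OF that(2)] that(1) unfolding Q_def by blast
  ultimately show ?thesis
    using E(1) unfolding Q_def by (intro that[of "E - 1"]) auto
qed

lemma indep3_at_plane_exit:
  assumes "Suc A \<le> B" "\<And>n. A \<le> n \<Longrightarrow> n \<le> B \<Longrightarrow> in_span2 (Xr A) (Xr (Suc A)) (Xr n)"
    and "\<not> in_span2 (Xr A) (Xr (Suc A)) (Xr (Suc B))"
  shows "indep3 (B - 1)"
proof -
  have B: "Suc (B - 1) = B" using assms(1) by simp
  show ?thesis
    unfolding indep3_def B using in_span2_trans[OF assms(2)[of "B - 1"] assms(2)[of B]] assms by auto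
qed

lemma span3_extends_to_plane_exit:
  assumes "indep3 P"
    and no_config: "\<And>B. Suc P < B \<Longrightarrow> in_span2 (Xr (Suc P)) (Xr (Suc (Suc P))) (Xr B) \<Longrightarrow>
      det4 (Xr P) (Xr (Suc P)) (Xr (Suc (Suc P))) (Xr (Suc B)) = 0"
  obtains B where "Suc (Suc P) \<le> B" "indep3 (B - 1)"
    "\<And>U V W n. det4 U V W (Xr P) = 0 \<Longrightarrow> det4 U V W (Xr (Suc P)) = 0 \<Longrightarrow>
      det4 U V W (Xr (Suc (Suc P))) = 0 \<Longrightarrow> Suc P \<le> n \<Longrightarrow> n \<le> Suc B \<Longrightarrow> det4 U V W (Xr n) = 0"
proof -
  obtain B where B: "Suc (Suc P) \<le> B"
    and plane: "\<And>n. Suc P \<le> n \<Longrightarrow> n \<le> B \<Longrightarrow> in_span2 (Xr (Suc P)) (Xr (Suc (Suc P))) (Xr n)"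
    and exit: "\<not> in_span2 (Xr (Suc P)) (Xr (Suc (Suc P))) (Xr (Suc B))"
    using plane_exit[of "Suc P"] by blast
  obtain l where l: "det4 (Xr P) (Xr (Suc P)) (Xr (Suc (Suc P))) (unit4 l) \<noteq> 0"
    using indep3_normal_nonzero[OF assms(1)] by blast
  have "det4 U V W (Xr n) = 0"
    if zero: "det4 U V W (Xr P) = 0" "det4 U V W (Xr (Suc P)) = 0" "det4 U V W (Xr (Suc (Suc P))) = 0"
      and n: "Suc P \<le> n" "n \<le> Suc B" for U V W n
  proof (cases "n \<le> B")
    case True
    then show ?thesis using det4_zero_on_span2[OF plane[OF n(1) True]] zero(2,3) by blast
  next
    case False
    then have "n = Suc B" using n(2) by simp
    moreover have "det4 (Xr P) (Xr (Suc P)) (Xr (Suc (Suc P))) (Xr (Suc B)) = 0"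
      using no_config plane[of B] B by simp
    ultimately show ?thesis using det4_zero_on_dependent[OF l] zero by blast
  qed
  moreover have "indep3 (B - 1)" using indep3_at_plane_exit[of "Suc P" B] B plane exit by simp
  ultimately show ?thesis using B that by blast
qed

text \<open>If such configurations stopped occurring, the 3-space spanned by
  \<open>x\<^sub>P\<^sub>0, x\<^sub>P\<^sub>0\<^sub>+\<^sub>1, x\<^sub>P\<^sub>0\<^sub>+\<^sub>2\<close> would, plane by plane, absorb every later \<open>x\<^sub>n\<close>.\<close>

lemma nonzero_det_after_plane:
  "\<exists>P\<ge>N. \<exists>B>Suc P. in_span2 (Xr (Suc P)) (Xr (Suc (Suc P))) (Xr B) \<and>
      det4 (Xr P) (Xr (Suc P)) (Xr (Suc (Suc P))) (Xr (Suc B)) \<noteq> 0"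
proof (rule ccontr)
  assume no_config: "\<not> ?thesis"
  obtain P0 where P0: "N \<le> P0" "indep3 P0" using indep3_frequently by blast
  define cf where "cf = det4 (Xr P0) (Xr (Suc P0)) (Xr (Suc (Suc P0)))"
  define good where "good P \<longleftrightarrow> P0 \<le> P \<and> indep3 P \<and> (\<forall>n. P0 \<le> n \<and> n \<le> Suc (Suc P) \<longrightarrow> cf (Xr n) = 0)"
    for P
  have "cf (Xr n) = 0" if "P0 \<le> n" "n \<le> Suc (Suc P0)" for n
  proof -
    have "n = P0 \<or> n = Suc P0 \<or> n = Suc (Suc P0)" using that by linarith
    then show ?thesis unfolding cf_def using det4_repeated by auto
  qed
  then have "good P0" unfolding good_def using P0(2) by blast
  have step: "\<exists>P'>P. good P'" if good: "good P" for P
  proof -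
    have P: "P0 \<le> P" "indep3 P" and old: "\<And>n. P0 \<le> n \<Longrightarrow> n \<le> Suc (Suc P) \<Longrightarrow> cf (Xr n) = 0"
      using good unfolding good_def by blast+
    have "det4 (Xr P) (Xr (Suc P)) (Xr (Suc (Suc P))) (Xr (Suc B)) = 0"
      if "Suc P < B" "in_span2 (Xr (Suc P)) (Xr (Suc (Suc P))) (Xr B)" for B
      using no_config that P0(1) P(1) by force
    then obtain B where B: "Suc (Suc P) \<le> B" "indep3 (B - 1)"
      and new: "\<And>n. Suc P \<le> n \<Longrightarrow> n \<le> Suc B \<Longrightarrow> cf (Xr n) = 0"
      using span3_extends_to_plane_exit[OF P(2)] old P(1) unfolding cf_def by (metis le_SucI order_refl)
    have "cf (Xr n) = 0" if "P0 \<le> n" "n \<le> Suc (Suc (B - 1))" for n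
      using old[OF that(1)] new[of n] that B(1) by (cases "n \<le> Suc P") auto
    then have "good (B - 1)" unfolding good_def using P(1) B by simp
    then show ?thesis using B by (intro exI[of _ "B - 1"]) simp
  qed
  have "cf (Xr n) = 0" if "P0 \<le> n" for n
  proof -
    obtain P where "n \<le> P" "good P" using unbounded_if_always_later[of good] \<open>good P0\<close> step by blast
    then show ?thesis using that unfolding good_def by simp
  qed
  moreover obtain l where "cf (unit4 l) \<noteq> 0"
    using indep3_normal_nonzero[OF P0(2)] unfolding cf_def by blast
  ultimately show False
    using det4_form_not_eventually_zero[of "X P0" "X (Suc P0)" "X (Suc (Suc P0))" l P0]
    unfolding cf_def by blast
qed

section \<open>The determinant estimate\<close>

lemma det4_Y_abs_ge_1:
  assumes "det4 (Xr a) (Xr b) (Xr c) (Xr d) \<noteq> 0"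
  shows "1 \<le> \<bar>det4 (Y a) (Y b) (Y c) (Y d)\<bar>"
proof -
  have "det4 (X a) (X b) (X c) (X d) \<noteq> 0" using assms unfolding det4_of_int by simp
  then have "1 \<le> \<bar>real_of_int (det4 (X a) (X b) (X c) (X d))\<bar>" by linarith
  then show ?thesis unfolding det4_of_int[symmetric] det4_Xr_eq_det4_Y by simp
qed

lemma in_span2_Y:
  assumes "in_span2 (Xr m) (Xr n) (Xr p)"
  shows "in_span2 (Y m) (Y n) (Y p)"
proof -
  obtain a b where "\<forall>k<4. Xr p k = a * Xr m k + b * Xr n k" using assms unfolding in_span2_def by blast
  then have "\<forall>k<4. Y p k = a * Y m k + b * Y n k" unfolding Y_eq_Xr by (simp add: algebra_simps)
  then show ?thesis unfolding in_span2_def by blast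
qed

text \<open>Subtracting multiples of \<open>y\<^sub>P\<^sub>+\<^sub>1\<close> (and of \<open>y\<^sub>B = \<alpha> y\<^sub>P\<^sub>+\<^sub>1 + \<beta> y\<^sub>P\<^sub>+\<^sub>2\<close>) clears the first
  coordinates of \<open>y\<^sub>P\<close> and \<open>y\<^sub>B\<^sub>+\<^sub>1\<close>, after which every remaining entry is small.\<close>

lemma det_config_bound:
  assumes "Suc P < B" and plane: "in_span2 (Xr (Suc P)) (Xr (Suc (Suc P))) (Xr B)"
    and nonzero: "det4 (Xr P) (Xr (Suc P)) (Xr (Suc (Suc P))) (Xr (Suc B)) \<noteq> 0"
  shows "real (bestq B) \<le>
    48 * real (bestq (Suc (Suc P))) * zeta (Suc P) * zeta P * real (bestq (Suc B)) * zeta B"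
proof -
  define A where "A = Suc P"
  define q where "q n = real (bestq n)" for n
  have q_pos: "0 < q n" for n unfolding q_def using bestq_ge_1[of n] by simp
  have q_mono: "m \<le> n \<Longrightarrow> q m \<le> q n" for m n
    unfolding q_def using bestq_strict_mono by (simp add: strict_mono_less_eq)
  obtain a b where ab: "\<forall>k<4. Y B k = a * Y A k + b * Y (Suc A) k"
    using in_span2_Y[OF plane] unfolding in_span2_def A_def by blast
  define c where "c = q P / q A"
  define d where "d = q (Suc B) / q B"
  define u where "u k = Y P k - c * Y A k" for k
  define v where "v k = Y (Suc B) k - (d * a) * Y A k - (d * b) * Y (Suc A) k" for k
  have c: "0 \<le> c" "c \<le> 1"
    unfolding c_def A_def using q_pos[of P] q_pos[of "Suc P"] q_mono[of P "Suc P"] by auto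
  have d: "1 \<le> d" unfolding d_def using q_pos q_mono[of B "Suc B"] by auto
  have v: "v k = Y (Suc B) k - d * Y B k" if "k < 4" for k
    unfolding v_def using ab that by (simp add: algebra_simps)
  have "1 \<le> \<bar>det4 (Y P) (Y A) (Y (Suc A)) (Y (Suc B))\<bar>"
    using det4_Y_abs_ge_1[OF nonzero] unfolding A_def .
  also have "det4 (Y P) (Y A) (Y (Suc A)) (Y (Suc B)) = det4 u (Y A) (Y (Suc A)) v"
    unfolding u_def v_def by (rule det4_column_ops[symmetric])
  also have "\<bar>\<dots>\<bar> \<le> 12 * Y (Suc A) 0 * (2 * zeta P) * zeta A * (2 * d * zeta B)"
  proof (rule det4_first_row_zero_abs_le)
    show "u 0 = 0" unfolding u_def c_def Y_0 q_def using q_pos[of A] by (simp add: q_def)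
    show "v 0 = 0" using v[of 0] q_pos[of B] unfolding d_def Y_0 q_def by simp
    show "0 \<le> Y A 0" "Y A 0 \<le> Y (Suc A) 0" unfolding Y_0 using q_mono[of A "Suc A"] by (auto simp: q_def)
    fix i :: nat assume i: "i \<in> {1,2,3}"
    have zeta: "zeta A \<le> zeta P" "zeta (Suc A) \<le> zeta A" "zeta (Suc B) \<le> zeta B"
      unfolding A_def by (auto intro: zeta_antimono)
    have "\<bar>c * Y A i\<bar> \<le> \<bar>Y A i\<bar>" using c by (simp add: abs_mult mult_left_le_one_le)
    then have "\<bar>c * Y A i\<bar> \<le> zeta A" using abs_Y_le_zeta[OF i, of A] by linarith
    then show "\<bar>u i\<bar> \<le> 2 * zeta P" unfolding u_def using abs_Y_le_zeta[OF i, of P] zeta by linarith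
    show "\<bar>Y A i\<bar> \<le> zeta A" "\<bar>Y (Suc A) i\<bar> \<le> zeta A"
      using abs_Y_le_zeta[OF i, of A] abs_Y_le_zeta[OF i, of "Suc A"] zeta by linarith+
    have "\<bar>d * Y B i\<bar> \<le> d * zeta B" using d abs_Y_le_zeta[OF i, of B] by (simp add: abs_mult)
    moreover have "zeta (Suc B) \<le> d * zeta B" using d zeta zeta_pos[of B] by (smt (verit) mult_le_cancel_right1)
    ultimately show "\<bar>v i\<bar> \<le> 2 * d * zeta B"
      using v[of i] i abs_Y_le_zeta[OF i, of "Suc B"] by auto
  qed
  finally have "1 \<le> 48 * q (Suc A) * zeta P * zeta A * zeta B * q (Suc B) / q B"
    unfolding d_def Y_0 q_def[symmetric] by (simp add: algebra_simps)
  then show ?thesis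
    using q_pos[of B] unfolding A_def q_def by (simp add: field_simps)
qed

lemma det_config_bound_unif:
  assumes g: "0 < \<gamma>" and C: "0 < C"
    and unif: "\<And>n. N0 \<le> n \<Longrightarrow> zeta n \<le> C * real (bestq (Suc n)) powr (-\<gamma>)"
    and "N0 \<le> P" "Suc P < B" "in_span2 (Xr (Suc P)) (Xr (Suc (Suc P))) (Xr B)"
    and "det4 (Xr P) (Xr (Suc P)) (Xr (Suc (Suc P))) (Xr (Suc B)) \<noteq> 0"
  shows "ln (real (bestq B)) \<le> ln (48 * C^3) + (1 - \<gamma>) * ln (real (bestq (Suc (Suc P))))
    - \<gamma> * ln (real (bestq (Suc P))) + (1 - \<gamma>) * ln (real (bestq (Suc B)))"
proof -
  define q where "q n = real (bestq n)" for n
  have q_pos: "0 < q n" for n unfolding q_def using bestq_ge_1[of n] by simp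
  have q_zeta: "q (Suc n) * zeta n \<le> C * q (Suc n) powr (1 - \<gamma>)" if "N0 \<le> n" for n
  proof -
    have "q (Suc n) * zeta n \<le> q (Suc n) * (C * q (Suc n) powr (-\<gamma>))"
      using unif[OF that] q_pos by (simp add: q_def)
    also have "\<dots> = C * q (Suc n) powr (1 - \<gamma>)"
      using q_pos[of "Suc n"] by (simp add: powr_diff powr_minus field_simps)
    finally show ?thesis .
  qed
  have nonneg: "0 \<le> q (Suc (Suc P)) * zeta (Suc P)" "0 \<le> zeta P" "0 \<le> q (Suc B) * zeta B"
    "0 \<le> C * q (Suc (Suc P)) powr (1 - \<gamma>)" "0 \<le> C * q (Suc P) powr (-\<gamma>)"
    using q_pos zeta_pos C by (auto intro: less_imp_le)
  have "q B \<le> 48 * (q (Suc (Suc P)) * zeta (Suc P)) * zeta P * (q (Suc B) * zeta B)"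
    using det_config_bound[OF assms(5-7)] unfolding q_def by (simp add: mult_ac)
  also have "\<dots> \<le> 48 * (C * q (Suc (Suc P)) powr (1 - \<gamma>)) * (C * q (Suc P) powr (-\<gamma>))
      * (C * q (Suc B) powr (1 - \<gamma>))"
  proof -
    have "48 * (q (Suc (Suc P)) * zeta (Suc P)) * zeta P \<le>
        48 * (C * q (Suc (Suc P)) powr (1 - \<gamma>)) * (C * q (Suc P) powr (-\<gamma>))"
      using nonneg
      by (intro mult_mono[OF mult_left_mono[OF q_zeta[of "Suc P"]]]) (use unif[of P] assms(4) in \<open>auto simp: q_def\<close>)
    then show ?thesis
      using nonneg assms(4,5) by (intro mult_mono[OF _ q_zeta[of B]]) auto
  qed
  also have "\<dots> = 48 * C^3 * q (Suc (Suc P)) powr (1 - \<gamma>) * q (Suc P) powr (-\<gamma>) * q (Suc B) powr (1 - \<gamma>)"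
    by (simp add: power3_eq_cube mult_ac)
  finally have "ln (q B) \<le> ln (48 * C^3 * q (Suc (Suc P)) powr (1 - \<gamma>) * q (Suc P) powr (-\<gamma>) * q (Suc B) powr (1 - \<gamma>))"
    using q_pos[of B] q_pos[of "Suc P"] q_pos[of "Suc B"] q_pos[of "Suc (Suc P)"] C
    by (subst ln_le_cancel_iff) auto
  then show ?thesis
    using q_pos C by (simp add: ln_mult ln_powr q_def)
qed

lemma det_config_log_ineq:
  assumes g: "0 < \<gamma>" "\<gamma> < 1" and C: "0 < C"
    and unif: "\<And>n. N0 \<le> n \<Longrightarrow> zeta n \<le> C * real (bestq (Suc n)) powr (-\<gamma>)"
    and config: "N0 \<le> P" "Suc P < B" "in_span2 (Xr (Suc P)) (Xr (Suc (Suc P))) (Xr B)"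
      "det4 (Xr P) (Xr (Suc P)) (Xr (Suc (Suc P))) (Xr (Suc B)) \<noteq> 0"
  defines "a \<equiv> \<gamma> / (1 - \<gamma>)" and "l \<equiv> \<lambda>n. ln (real (bestq n))"
  shows "(1 + a) * l B \<le> (1 + a) * ln (48 * C^3) + l (Suc (Suc P)) - a * l (Suc P) + l (Suc B)"
proof -
  have a: "0 < a" "(1 + a) * (1 - \<gamma>) = 1" "(1 + a) * \<gamma> = a"
    unfolding a_def using g by (auto simp: field_simps)
  have "(1 + a) * l B \<le> (1 + a) * (ln (48 * C^3) + (1 - \<gamma>) * l (Suc (Suc P)) - \<gamma> * l (Suc P)
      + (1 - \<gamma>) * l (Suc B))"
    using det_config_bound_unif[OF g(1) C unif config] a(1) unfolding l_def
    by (intro mult_left_mono) auto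
  also have "\<dots> = (1 + a) * ln (48 * C^3) + ((1 + a) * (1 - \<gamma>)) * l (Suc (Suc P))
      - ((1 + a) * \<gamma>) * l (Suc P) + ((1 + a) * (1 - \<gamma>)) * l (Suc B)"
    by (simp add: algebra_simps)
  finally show ?thesis unfolding a(2,3) by simp
qed

lemma ln_bestq_mono:
  assumes "m \<le> n"
  shows "ln (real (bestq m)) \<le> ln (real (bestq n))"
proof -
  have "bestq m \<le> bestq n" using assms bestq_strict_mono by (simp add: strict_mono_less_eq)
  then show ?thesis using bestq_ge_1[of m] by simp
qed

lemma frequent_jumps:
  assumes g: "0 < \<gamma>" "\<gamma> < 1" and C: "0 < C"
    and unif: "\<And>n. N0 \<le> n \<Longrightarrow> zeta n \<le> C * real (bestq (Suc n)) powr (-\<gamma>)"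
    and G: "0 < G" "G^2 < (\<gamma> / (1 - \<gamma>)) * G + \<gamma> / (1 - \<gamma>)"
  shows "\<exists>n\<ge>N. real (bestq n) powr G \<le> real (bestq (Suc n))"
proof (rule ccontr)
  assume no_jump: "\<not> ?thesis"
  define l where "l n = ln (real (bestq n))" for n
  have slow: "l (Suc n) \<le> G * l n" if "N \<le> n" for n
  proof -
    have "real (bestq (Suc n)) < real (bestq n) powr G" using no_jump that by force
    then have "l (Suc n) < ln (real (bestq n) powr G)"
      unfolding l_def using bestq_ge_1[of "Suc n"] bestq_ge_1[of n] by (subst ln_less_cancel_iff) auto
    then show ?thesis unfolding l_def using bestq_ge_1[of n] by (simp add: ln_powr)
  qed
  define a where "a = \<gamma> / (1 - \<gamma>)"
  define bound where "bound = \<bar>(1 + a) * ln (48 * C^3)\<bar> * (1 / a + 1 / (a + a * G - G^2))"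
  obtain m :: nat where m: "exp bound < real m" using reals_Archimedean2 by blast
  obtain P B where P: "max (max N N0) m \<le> P" and B: "Suc P < B"
    and config: "in_span2 (Xr (Suc P)) (Xr (Suc (Suc P))) (Xr B)"
      "det4 (Xr P) (Xr (Suc P)) (Xr (Suc (Suc P))) (Xr (Suc B)) \<noteq> 0"
    using nonzero_det_after_plane by blast
  have "l (Suc P) \<le> bound"
    unfolding bound_def
  proof (rule slow_growth_bounded)
    show "0 < a" "G^2 < a * G + a" unfolding a_def using g G(2) by auto
    show "(1 + a) * l B \<le> (1 + a) * ln (48 * C^3) + l (Suc (Suc P)) - a * l (Suc P) + l (Suc B)"
      using det_config_log_ineq[OF g C unif _ B config] P unfolding a_def l_def by simp
    show "l (Suc B) \<le> G * l B" "l (Suc (Suc P)) \<le> G * l (Suc P)"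
      using slow[of B] slow[of "Suc P"] P B by auto
    show "l (Suc (Suc P)) \<le> l B" "l (Suc P) \<le> l (Suc (Suc P))"
      using B unfolding l_def by (auto intro: ln_bestq_mono)
    show "0 \<le> l (Suc P)" unfolding l_def using bestq_ge_1[of "Suc P"] by simp
  qed (rule G(1))
  moreover have "exp bound < real (bestq (Suc P))"
    using m P bestq_ge[of "Suc P"] by linarith
  moreover have "exp (l (Suc P)) = real (bestq (Suc P))"
    unfolding l_def using bestq_ge_1[of "Suc P"] by simp
  ultimately show False using exp_le_cancel_iff[of "l (Suc P)" bound] by linarith
qed

section \<open>Diophantine exponents\<close>

definition unif_exps :: "real set" where
  "unif_exps = {\<gamma>. \<gamma> > 0 \<and> Limsup at_top (\<lambda>t. ereal (t powr \<gamma> * psi th1 th2 th3 t)) < \<infinity>}"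

definition ord_exps :: "real set" where
  "ord_exps = {\<gamma>. \<gamma> > 0 \<and> Liminf at_top (\<lambda>t. ereal (t powr \<gamma> * psi th1 th2 th3 t)) < \<infinity>}"

lemma unif_exp_eq_Sup: "unif_exp th1 th2 th3 = Sup (ereal ` unif_exps)"
  unfolding unif_exp_def unif_exps_def ..

lemma ord_exp_eq_Sup: "ord_exp th1 th2 th3 = Sup (ereal ` ord_exps)"
  unfolding ord_exp_def ord_exps_def ..

lemma third_in_unif_exps: "1/3 \<in> unif_exps"
proof -
  have "t powr (1/3) * psi th1 th2 th3 t \<le> 2" if t: "1 \<le> t" for t :: real
  proof -
    define r where "r = t powr (1/3)"
    have r: "1 \<le> r" "r ^ 3 = t"
      unfolding r_def using t by (auto simp: ge_one_powr_ge_zero powr_realpow[symmetric] powr_powr)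
    define N where "N = nat \<lfloor>r\<rfloor>"
    have N: "1 \<le> N" "real N \<le> r" "r < real N + 1" unfolding N_def using r(1) by linarith+
    then have "real (N^3) \<le> t" using r(2) by (metis of_nat_power power_mono of_nat_0_le_iff)
    then obtain x where x: "1 \<le> x" "real x \<le> t" "sdist x < 1 / real N"
      using dirichlet[OF N(1)] by (meson of_nat_le_iff order_trans)
    have "r * psi th1 th2 th3 t \<le> (2 * real N) * (1 / real N)"
      using N(1-3) psi_nonneg[OF t] psi_le_sdist[OF x(1,2)] x(3)
      by (intro mult_mono) auto
    then show ?thesis using N(1) unfolding r_def by simp
  qed
  then have "Limsup at_top (\<lambda>t. ereal (t powr (1/3) * psi th1 th2 th3 t)) \<le> ereal 2"
    by (intro Limsup_bounded) (auto simp: eventually_at_top_linorder)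
  then show ?thesis unfolding unif_exps_def by (auto simp: le_less_trans)
qed

lemma unif_exps_down:
  assumes "\<gamma> \<in> unif_exps" "0 < \<gamma>'" "\<gamma>' \<le> \<gamma>"
  shows "\<gamma>' \<in> unif_exps"
proof -
  have "\<forall>\<^sub>F t in at_top. ereal (t powr \<gamma>' * psi th1 th2 th3 t) \<le> ereal (t powr \<gamma> * psi th1 th2 th3 t)"
    unfolding eventually_at_top_linorder
    using assms(3) psi_nonneg by (intro exI[of _ 1]) (auto intro: mult_right_mono powr_mono)
  then have "Limsup at_top (\<lambda>t. ereal (t powr \<gamma>' * psi th1 th2 th3 t)) \<le>
      Limsup at_top (\<lambda>t. ereal (t powr \<gamma> * psi th1 th2 th3 t))" by (rule Limsup_mono)
  then show ?thesis using assms unfolding unif_exps_def by auto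
qed

lemma zeta_bound_if_unif_exps:
  assumes "\<gamma> \<in> unif_exps"
  obtains C N0 where "0 < C" "\<And>n. N0 \<le> n \<Longrightarrow> zeta n \<le> C * real (bestq (Suc n)) powr (-\<gamma>)"
proof -
  have g: "0 < \<gamma>" and fin: "Limsup at_top (\<lambda>t. ereal (t powr \<gamma> * psi th1 th2 th3 t)) < \<infinity>"
    using assms unfolding unif_exps_def by auto
  obtain M where M: "0 < M" "Limsup at_top (\<lambda>t. ereal (t powr \<gamma> * psi th1 th2 th3 t)) < ereal M"
  proof (cases "Limsup at_top (\<lambda>t. ereal (t powr \<gamma> * psi th1 th2 th3 t))")
    case (real r)
    then show ?thesis using that[of "max r 0 + 1"] by auto
  qed (use fin that[of 1] in auto)
  have "\<forall>\<^sub>F t in at_top. ereal (t powr \<gamma> * psi th1 th2 th3 t) < ereal M"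
    by (rule Limsup_lessD[OF M(2)])
  then obtain T where T: "\<And>t. T \<le> t \<Longrightarrow> t powr \<gamma> * psi th1 th2 th3 t < M"
    unfolding eventually_at_top_linorder by auto
  obtain N0 :: nat where N0: "T < real N0" using reals_Archimedean2 by blast
  have "zeta n \<le> (M * 2 powr \<gamma>) * real (bestq (Suc n)) powr (-\<gamma>)" if n: "N0 \<le> n" for n
  proof -
    define q where "q = real (bestq (Suc n))"
    \<comment> \<open>just below \<open>q\<^sub>n\<^sub>+\<^sub>1\<close> the function \<open>\<psi>\<close> equals \<open>\<zeta>\<^sub>n\<close>\<close>
    define t where "t = q - 1/2"
    have q: "real (bestq n) + 1 \<le> q" "1 \<le> real (bestq n)" "real n + 1 \<le> real (bestq n)"
      unfolding q_def using bestq_less_Suc[of n] bestq_ge_1[of n] bestq_ge[of n] by auto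
    have "psi th1 th2 th3 t = zeta n" unfolding t_def using q by (intro psi_eq_zeta) (auto simp: q_def)
    moreover have "T \<le> t" unfolding t_def using q N0 n by simp
    ultimately have "t powr \<gamma> * zeta n < M" using T by metis
    then have "zeta n \<le> M * t powr (-\<gamma>)"
      using q unfolding t_def by (simp add: powr_minus_divide field_simps)
    also have "\<dots> \<le> M * (q / 2) powr (-\<gamma>)"
      using q g M(1) unfolding t_def by (intro mult_left_mono powr_mono2') auto
    also have "\<dots> = (M * 2 powr \<gamma>) * q powr (-\<gamma>)"
      using q by (simp add: powr_divide powr_minus_divide)
    finally show ?thesis unfolding q_def .
  qed
  then show ?thesis using M(1) by (intro that[of "M * 2 powr \<gamma>" N0]) auto
qed

lemma ord_exps_if_frequently_small:
  assumes "0 < b" and small: "\<And>N. \<exists>n\<ge>N. zeta n \<le> C * real (bestq n) powr (-b)"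
  shows "b \<in> ord_exps"
proof -
  have "Liminf at_top (\<lambda>t. ereal (t powr b * psi th1 th2 th3 t)) \<le> ereal C"
  proof (rule ccontr)
    assume "\<not> ?thesis"
    then have "\<forall>\<^sub>F t in at_top. ereal C < ereal (t powr b * psi th1 th2 th3 t)"
      by (intro less_LiminfD) simp
    then obtain T where T: "\<And>t. T \<le> t \<Longrightarrow> C < t powr b * psi th1 th2 th3 t"
      unfolding eventually_at_top_linorder by auto
    obtain N :: nat where N: "T < real N" using reals_Archimedean2 by blast
    obtain n where n: "N \<le> n" "zeta n \<le> C * real (bestq n) powr (-b)" using small by blast
    define t where "t = real (bestq n)"
    have t: "T \<le> t" "0 < t" unfolding t_def using bestq_ge[of n] N n(1) by auto
    have "psi th1 th2 th3 t = zeta n"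
      unfolding t_def by (rule psi_eq_zeta) (use bestq_less_Suc[of n] in auto)
    moreover have "t powr b * zeta n \<le> t powr b * (C * t powr (-b))"
      using n(2) unfolding t_def by (intro mult_left_mono) auto
    ultimately show False using T[OF t(1)] t(2) by (simp add: powr_minus_divide)
  qed
  then show ?thesis unfolding ord_exps_def using assms(1) by (auto simp: le_less_trans)
qed

lemma ord_exps_below_g3:
  assumes U: "\<gamma> \<in> unif_exps" and "\<gamma> < 1" and b: "0 < b" "b < \<gamma> * g3 \<gamma>"
  shows "b \<in> ord_exps"
proof -
  have g: "0 < \<gamma>" using U unfolding unif_exps_def by auto
  define G where "G = b / \<gamma>"
  have G: "0 < G" "G < g3 \<gamma>" unfolding G_def using b g by (auto simp: field_simps)
  then have G2: "G^2 < (\<gamma> / (1 - \<gamma>)) * G + \<gamma> / (1 - \<gamma>)"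
    using g \<open>\<gamma> < 1\<close> by (intro sq_lt_if_lt_quadratic_root) (auto simp: g3_eq)
  obtain C N0 where C: "0 < C" "\<And>n. N0 \<le> n \<Longrightarrow> zeta n \<le> C * real (bestq (Suc n)) powr (-\<gamma>)"
    using zeta_bound_if_unif_exps[OF U] by blast
  have "b = \<gamma> * G" unfolding G_def using g by simp
  moreover have "\<exists>n\<ge>N. zeta n \<le> C * real (bestq n) powr (- (\<gamma> * G))" for N
  proof -
    obtain n where n: "max N N0 \<le> n" "real (bestq n) powr G \<le> real (bestq (Suc n))"
      using frequent_jumps[OF g \<open>\<gamma> < 1\<close> C G(1) G2] by blast
    have "zeta n \<le> C * real (bestq (Suc n)) powr (-\<gamma>)" using C(2) n(1) by simp
    also have "\<dots> \<le> C * (real (bestq n) powr G) powr (-\<gamma>)"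
      using n(2) bestq_ge_1[of n] g C(1) by (intro mult_left_mono powr_mono2') auto
    also have "\<dots> = C * real (bestq n) powr (- (\<gamma> * G))" by (simp add: powr_powr mult_ac)
    finally show ?thesis using n(1) by auto
  qed
  moreover have "0 < \<gamma> * G" using g G(1) by simp
  ultimately show ?thesis using ord_exps_if_frequently_small[of "\<gamma> * G" C] by blast
qed

lemma unif_exp_ge_third: "ereal (1/3) \<le> unif_exp th1 th2 th3"
  unfolding unif_exp_eq_Sup using third_in_unif_exps by (intro Sup_upper) auto

lemma ereal_le_ord_exp:
  assumes "0 < T" and "\<And>b. 0 < b \<Longrightarrow> b < T \<Longrightarrow> b \<in> ord_exps"
  shows "ereal T \<le> ord_exp th1 th2 th3"
  unfolding ord_exp_eq_Sup le_Sup_iff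
proof (intro allI impI)
  fix y assume "y < ereal T"
  then obtain z where z: "y < ereal z" "z < T" using ereal_dense2 by force
  then have "max z (T/2) \<in> ord_exps" using assms by simp
  moreover have "y < ereal (max z (T/2))" using z(1) by (simp add: less_max_iff_disj)
  ultimately show "\<exists>a\<in>ereal ` ord_exps. y < a" by blast
qed


lemma ord_exp_ge_g3_unif_exp:
  assumes "unif_exp th1 th2 th3 < 1"
  defines "\<alpha> \<equiv> real_of_ereal (unif_exp th1 th2 th3)"
  shows "ereal (\<alpha> * g3 \<alpha>) \<le> ord_exp th1 th2 th3"
proof -
  have \<alpha>: "unif_exp th1 th2 th3 = ereal \<alpha>" "1/3 \<le> \<alpha>" "\<alpha> < 1"
    using unif_exp_ge_third assms(1) unfolding \<alpha>_def by (cases "unif_exp th1 th2 th3"; simp)+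
  define h where "h x = x * g3 x" for x
  have "0 < h \<alpha>" unfolding h_def using ratio_le_g3[of \<alpha>] \<alpha> by (smt (verit) divide_pos_pos mult_pos_pos)
  moreover have "b \<in> ord_exps" if b: "0 < b" "b < h \<alpha>" for b
  proof -
    \<comment> \<open>\<open>\<alpha>\<close> itself need not lie in \<open>unif_exps\<close>: approach it from below by continuity of \<open>h\<close>\<close>
    have "isCont h \<alpha>" unfolding h_def g3_def using \<alpha> by (intro continuous_intros) auto
    then obtain s where s: "0 < s" "\<And>x. \<bar>x - \<alpha>\<bar> < s \<Longrightarrow> \<bar>h x - h \<alpha>\<bar> < h \<alpha> - b"
      unfolding isCont_def LIM_eq using b by (metis diff_gt_0_iff_gt real_norm_def diff_self abs_zero)
    have "ereal (max (\<alpha> - s/2) (\<alpha>/2)) < Sup (ereal ` unif_exps)"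
      using s(1) \<alpha> unfolding unif_exp_eq_Sup[symmetric] by simp
    then obtain \<gamma> where \<gamma>: "\<gamma> \<in> unif_exps" "max (\<alpha> - s/2) (\<alpha>/2) < \<gamma>" unfolding less_Sup_iff by auto
    have "ereal \<gamma> \<le> Sup (ereal ` unif_exps)" using \<gamma>(1) by (intro Sup_upper) auto
    then have "\<gamma> \<le> \<alpha>" using \<alpha>(1) unfolding unif_exp_eq_Sup by simp
    then have "b < h \<gamma>" using s(2)[of \<gamma>] \<gamma>(2) s(1) by auto
    then show ?thesis
      using ord_exps_below_g3[OF \<gamma>(1)] \<open>\<gamma> \<le> \<alpha>\<close> \<alpha>(3) b(1) unfolding h_def by simp
  qed
  ultimately show ?thesis using ereal_le_ord_exp unfolding h_def by blast
qed

lemma ord_exp_infinite_if_unif_exp_1: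
  assumes "unif_exp th1 th2 th3 = 1"
  shows "ord_exp th1 th2 th3 = \<infinity>"
proof (rule ereal_top)
  fix B :: real
  define b where "b = max B 1"
  define g0 where "g0 = 1 - 1 / (4 * b + 4)"
  have b: "1 \<le> b" "B \<le> b" unfolding b_def by simp_all
  have g0: "3/4 < g0" "g0 < 1" unfolding g0_def using b by (auto simp: field_simps)
  have "ereal g0 < Sup (ereal ` unif_exps)" using assms g0 unfolding unif_exp_eq_Sup by simp
  then obtain g1 where g1: "g1 \<in> unif_exps" "g0 < g1" unfolding less_Sup_iff by auto
  define \<gamma> where "\<gamma> = min g1 ((g0 + 1) / 2)"
  have \<gamma>: "g0 < \<gamma>" "\<gamma> < 1" unfolding \<gamma>_def using g1(2) g0 by (auto simp: min_less_iff_disj)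
  have "\<gamma> \<in> unif_exps" by (rule unif_exps_down[OF g1(1)]) (use \<gamma> g0 in \<open>auto simp: \<gamma>_def\<close>)
  have "1 - \<gamma> < 1 / (4 * b + 4)" "0 < 1 - \<gamma>" using \<gamma> unfolding g0_def by auto
  then have "4 * b + 4 < 1 / (1 - \<gamma>)" using b(1) by (simp add: field_simps)
  moreover have "(1/2) * (1 / (1 - \<gamma>)) \<le> \<gamma> * (\<gamma> / (1 - \<gamma>))"
  proof -
    have "(3/4) * (3/4) \<le> \<gamma> * \<gamma>" using \<gamma>(1) g0(1) by (intro mult_mono) auto
    then have "(1/2) / (1 - \<gamma>) \<le> (\<gamma> * \<gamma>) / (1 - \<gamma>)" using \<gamma>(2) by (intro divide_right_mono) auto
    then show ?thesis by simp
  qed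
  moreover have "\<gamma> * (\<gamma> / (1 - \<gamma>)) \<le> \<gamma> * g3 \<gamma>"
    using ratio_le_g3[of \<gamma>] \<gamma> g0 by (intro mult_left_mono) auto
  ultimately have "b < \<gamma> * g3 \<gamma>" using b(1) by linarith
  then have "b \<in> ord_exps" using ord_exps_below_g3[OF \<open>\<gamma> \<in> unif_exps\<close> \<gamma>(2)] b(1) by simp
  then have "ereal b \<le> ord_exp th1 th2 th3" unfolding ord_exp_eq_Sup by (intro Sup_upper) auto
  then show "ereal B \<le> ord_exp th1 th2 th3" using b(2) by (metis ereal_less_eq(3) order_trans)
qed

end

theorem theorem5:
  fixes th1 th2 th3 :: real
  assumes indep: "\<And>a0 a1 a2 a3 :: int.
      of_int a0 + of_int a1 * th1 + of_int a2 * th2 + of_int a3 * th3 = 0 \<Longrightarrow>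
      a0 = 0 \<and> a1 = 0 \<and> a2 = 0 \<and> a3 = 0"
  shows "(unif_exp th1 th2 th3 < 1 \<longrightarrow>
            ord_exp th1 th2 th3 \<ge>
              ereal (real_of_ereal (unif_exp th1 th2 th3) * g3 (real_of_ereal (unif_exp th1 th2 th3))))
       \<and> (unif_exp th1 th2 th3 = 1 \<longrightarrow> ord_exp th1 th2 th3 = \<infinity>)"
proof -
  interpret Z_independent th1 th2 th3 using indep by unfold_locales
  show ?thesis using ord_exp_ge_g3_unif_exp ord_exp_infinite_if_unif_exp_1 by blast
qed

end
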